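(* There exists $\overline x>0$ such that $\mu(x)-rU(x)>0$ for $x\in[0,\overline x)$ and $\mu(x)-rU(x)<0$ for $x\in(\overline x,\infty)$. Moreover $\overline x\ge u^*$ and $\mathcal LU(m)-rU(m)>0$ for all $m\in[u^*,\overline x)$.
   Context: Let $\mu,\sigma$ be real functions defined on an interval $\mathcal I=(\alpha,\infty)$ with $-\infty\le\alpha<0$, with $\sigma>0$, and let $r>0$. Assume: $\mu$ and $\sigma$ are $C^1$ with Lipschitz derivatives, $\mu(0)>rU(0)$ and $\sup_{x\ge0}\mu'(x)<r$. The function $U:[0,\infty)\to[0,\infty)$ is nondecreasing, concave and twice continuously differentiable on $[0,\infty)$, and there is $u^*\ge0$ with $U'(m)\ge1$ for $m\le u^*$, $U'(m)=1$ for $m\ge u^*$, and $\mathcal LU(m)-rU(m)>0$ for all $m\in[0,u^* )$, where $\mathcal Lh(x)=\mu(x)h'(x)+\tfrac12\sigma^2(x)h''(x)$. *)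

theory Defs
  imports "HOL-Analysis.Analysis"
begin

definition gen :: "(real \<Rightarrow> real) \<Rightarrow> (real \<Rightarrow> real) \<Rightarrow> (real \<Rightarrow> real) \<Rightarrow> (real \<Rightarrow> real) \<Rightarrow> real \<Rightarrow> real" where
  "gen \<mu> \<sigma> h' h'' x = \<mu> x * h' x + 1/2 * (\<sigma> x)^2 * h'' x"

end

theory Submission
  imports Defs
begin

text \<open>Since U' \<ge> 1 and \<mu>' \<le> c < r on [0, \<infinity>), the function f = \<mu> - r U decreases at least
  linearly with slope c - r; as f(0) > 0 it has exactly one zero xb, and f > 0 before it, f < 0
  after it. Beyond u* we have U' = 1 and hence U'' = 0, so there LU - rU coincides with f.
  Letting m tend to u* from below in LU(m) - rU(m) > 0 gives f(u*) \<ge> 0, whence u* \<le> xb, and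
  on [u*, xb) the positivity of LU - rU is that of f.\<close>

lemma has_real_derivative_at_within_atLeast:
  assumes "(f has_real_derivative D) (at x within {a..})" and "a < x"
  shows "(f has_real_derivative D) (at x)"
proof -
  have "at x within {a..} = at x"
    using \<open>a < x\<close> by (intro at_within_interior) (simp add: interior_real_atLeast)
  then show ?thesis using assms(1) by simp
qed

lemma increment_le_of_DERIV_le:
  fixes f :: "real \<Rightarrow> real"
  assumes "a \<le> b" and "continuous_on {a..b} f"
    and "\<And>x. a < x \<Longrightarrow> x < b \<Longrightarrow> (f has_real_derivative f' x) (at x)"
    and "\<And>x. a < x \<Longrightarrow> x < b \<Longrightarrow> f' x \<le> k"
  shows "f b - f a \<le> k * (b - a)"
proof (cases "a = b")
  case False
  then obtain l z where z: "a < z" "z < b" "(f has_real_derivative l) (at z)"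
    and increment: "f b - f a = (b - a) * l"
    using MVT[of a b f] assms by (force simp: real_differentiable_def)
  have "l = f' z" using DERIV_unique[OF z(3) assms(3)[OF z(1,2)]] .
  then have "l \<le> k" using assms(4) z by simp
  then show ?thesis using increment mult_right_mono[of l k "b - a"] \<open>a \<le> b\<close> by (simp add: mult.commute)
qed simp

lemma diff_increment_le_of_slope_bounds:
  fixes g U :: "real \<Rightarrow> real"
  assumes "a \<le> x" "x \<le> y" "r \<ge> 0"
    and g_deriv: "\<And>t. a < t \<Longrightarrow> (g has_real_derivative g' t) (at t)"
    and g'_le: "\<And>t. a < t \<Longrightarrow> g' t \<le> c"
    and U_deriv: "\<And>t. a \<le> t \<Longrightarrow> (U has_real_derivative U' t) (at t within {a..})"
    and U'_ge: "\<And>t. a < t \<Longrightarrow> U' t \<ge> 1"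
    and cont: "continuous_on {a..} (\<lambda>t. g t - r * U t)"
  shows "(g y - r * U y) - (g x - r * U x) \<le> (c - r) * (y - x)"
proof (rule increment_le_of_DERIV_le[where f' = "\<lambda>t. g' t - r * U' t"])
  fix t assume "x < t" "t < y"
  then have "a < t" using \<open>a \<le> x\<close> by simp
  have "(U has_real_derivative U' t) (at t)"
    using U_deriv \<open>a < t\<close> by (intro has_real_derivative_at_within_atLeast) auto
  then show "((\<lambda>t. g t - r * U t) has_real_derivative g' t - r * U' t) (at t)"
    using g_deriv[OF \<open>a < t\<close>] by (intro DERIV_diff DERIV_cmult)
  have "r \<le> r * U' t" using \<open>r \<ge> 0\<close> mult_left_mono[OF U'_ge[OF \<open>a < t\<close>]] by simp
  then show "g' t - r * U' t \<le> c - r" using g'_le[OF \<open>a < t\<close>] by simp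
qed (use assms(1,2) continuous_on_subset[OF cont] in auto)

lemma linearly_decreasing_sign_change:
  fixes f :: "real \<Rightarrow> real"
  assumes cont: "continuous_on {a..} f" and pos: "f a > 0" and "k < 0"
    and slope: "\<And>x y. a \<le> x \<Longrightarrow> x \<le> y \<Longrightarrow> f y - f x \<le> k * (y - x)"
  shows "\<exists>x\<^sub>0>a. (\<forall>x. a \<le> x \<and> x < x\<^sub>0 \<longrightarrow> f x > 0) \<and> (\<forall>x>x\<^sub>0. f x < 0)"
proof -
  have strict: "f y < f x" if "a \<le> x" "x < y" for x y
    using slope[of x y] that \<open>k < 0\<close> mult_neg_pos[of k "y - x"] by simp
  define b where "b = a + f a / (- k) + 1"
  have "b > a" using pos \<open>k < 0\<close> unfolding b_def by (simp add: divide_pos_pos add_pos_pos)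
  have "f b \<le> f a + k * (b - a)" using slope[of a b] \<open>b > a\<close> by simp
  also have "\<dots> = k" using \<open>k < 0\<close> unfolding b_def by (simp add: field_simps)
  finally have "f b < 0" using \<open>k < 0\<close> by simp
  then obtain x\<^sub>0 where x\<^sub>0: "a \<le> x\<^sub>0" "x\<^sub>0 \<le> b" "f x\<^sub>0 = 0"
    using IVT2'[of f b 0 a] pos \<open>b > a\<close> continuous_on_subset[OF cont, of "{a..b}"] by force
  have "x\<^sub>0 \<noteq> a" using x\<^sub>0 pos by auto
  then show ?thesis
    using x\<^sub>0 strict by (metis order.not_eq_order_implies_strict)
qed

lemma second_derivative_zero_where_first_constant:
  fixes U' U'' :: "real \<Rightarrow> real"
  assumes "a \<le> u"
    and U'_deriv: "\<And>x. x \<ge> a \<Longrightarrow> (U' has_real_derivative U'' x) (at x within {a..})"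
    and "continuous_on {a..} U''"
    and U'_const: "\<And>x. x \<ge> u \<Longrightarrow> U' x = K"
    and "u \<le> m"
  shows "U'' m = 0"
proof (rule continuous_constant_on_closure[where S = "{u<..}" and f = U'' and a = 0])
  show "continuous_on (closure {u<..}) U''"
    using continuous_on_subset[OF \<open>continuous_on {a..} U''\<close>] \<open>a \<le> u\<close> by simp
  show "U'' x = 0" if "x \<in> {u<..}" for x
  proof -
    have "(U' has_real_derivative U'' x) (at x)"
      using U'_deriv that \<open>a \<le> u\<close> by (intro has_real_derivative_at_within_atLeast[where a = a]) auto
    moreover have "(U' has_real_derivative 0) (at x)"
      by (rule has_field_derivative_transform_within_open[OF DERIV_const, of "{u<..}"])
        (use that U'_const in auto)
    ultimately show ?thesis by (rule DERIV_unique)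
  qed
qed (use \<open>u \<le> m\<close> in simp)

lemma continuous_on_pos_imp_nonneg_at_right_endpoint:
  fixes g :: "real \<Rightarrow> real"
  assumes "a < b" and "continuous_on {a..b} g" and "\<And>x. a \<le> x \<Longrightarrow> x < b \<Longrightarrow> g x > 0"
  shows "g b \<ge> 0"
proof (rule continuous_ge_on_closure[where S = "{a..<b}" and f = g and x = b])
  show "continuous_on (closure {a..<b}) g" and "b \<in> closure {a..<b}"
    using assms(1,2) by auto
qed (use assms(3) in \<open>force intro: less_imp_le\<close>)

theorem lemma2:
  fixes \<alpha> :: ereal and \<mu> \<sigma> \<mu>' \<sigma>' U U' U'' :: "real \<Rightarrow> real" and r u\<^sub>s Lm Ls :: real
  assumes \<alpha>_neg: "\<alpha> < 0"
    and \<sigma>_pos: "\<And>x. \<alpha> < ereal x \<Longrightarrow> \<sigma> x > 0"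
    and r_pos: "r > 0"
    and \<mu>_deriv: "\<And>x. \<alpha> < ereal x \<Longrightarrow> (\<mu> has_real_derivative \<mu>' x) (at x)"
    and \<mu>'_lip: "Lm-lipschitz_on {x. \<alpha> < ereal x} \<mu>'"
    and \<sigma>_deriv: "\<And>x. \<alpha> < ereal x \<Longrightarrow> (\<sigma> has_real_derivative \<sigma>' x) (at x)"
    and \<sigma>'_lip: "Ls-lipschitz_on {x. \<alpha> < ereal x} \<sigma>'"
    and \<mu>0: "\<mu> 0 > r * U 0"
    and sup_\<mu>': "\<exists>c<r. \<forall>x\<ge>0. \<mu>' x \<le> c"
    and U_nonneg: "\<And>x. x \<ge> 0 \<Longrightarrow> U x \<ge> 0"
    and U_mono: "mono_on {0..} U"
    and U_concave: "concave_on {0..} U"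
    and U_deriv: "\<And>x. x \<ge> 0 \<Longrightarrow> (U has_real_derivative U' x) (at x within {0..})"
    and U'_deriv: "\<And>x. x \<ge> 0 \<Longrightarrow> (U' has_real_derivative U'' x) (at x within {0..})"
    and U''_cont: "continuous_on {0..} U''"
    and u_nonneg: "u\<^sub>s \<ge> 0"
    and U'_ge1: "\<And>m. 0 \<le> m \<Longrightarrow> m \<le> u\<^sub>s \<Longrightarrow> U' m \<ge> 1"
    and U'_eq1: "\<And>m. m \<ge> u\<^sub>s \<Longrightarrow> U' m = 1"
    and LU_pos: "\<And>m. 0 \<le> m \<Longrightarrow> m < u\<^sub>s \<Longrightarrow> gen \<mu> \<sigma> U' U'' m - r * U m > 0"
  shows "\<exists>xb>0. (\<forall>x. 0 \<le> x \<and> x < xb \<longrightarrow> \<mu> x - r * U x > 0)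
              \<and> (\<forall>x>xb. \<mu> x - r * U x < 0)
              \<and> xb \<ge> u\<^sub>s
              \<and> (\<forall>m. u\<^sub>s \<le> m \<and> m < xb \<longrightarrow> gen \<mu> \<sigma> U' U'' m - r * U m > 0)"
proof -
  obtain c where "c < r" and \<mu>'_le: "\<And>x. x \<ge> 0 \<Longrightarrow> \<mu>' x \<le> c" using sup_\<mu>' by blast
  have \<alpha>_lt: "\<alpha> < ereal x" if "x \<ge> 0" for x
    using \<alpha>_neg that by (metis ereal_less_eq(3) order_less_le_trans zero_ereal_def)
  have cont_\<mu>: "continuous_on {0..} \<mu>" and cont_\<sigma>: "continuous_on {0..} \<sigma>"
    using DERIV_isCont[OF \<mu>_deriv[OF \<alpha>_lt]] DERIV_isCont[OF \<sigma>_deriv[OF \<alpha>_lt]]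
    by (auto intro: continuous_at_imp_continuous_on)
  have cont_U: "continuous_on {0..} U" and cont_U': "continuous_on {0..} U'"
    using U_deriv U'_deriv by (auto intro: DERIV_continuous_on[where D = U'] DERIV_continuous_on[where D = U''])
  define f where "f x = \<mu> x - r * U x" for x
  have cont_f: "continuous_on {0..} f"
    unfolding f_def by (intro continuous_intros cont_\<mu> cont_U)
  have U'_ge1_all: "U' t \<ge> 1" if "t \<ge> 0" for t
    using U'_ge1 U'_eq1 that by (cases "t \<le> u\<^sub>s") auto
  have f_slope: "f y - f x \<le> (c - r) * (y - x)" if "0 \<le> x" "x \<le> y" for x y
    unfolding f_def using that r_pos \<mu>_deriv[OF \<alpha>_lt] \<mu>'_le U_deriv U'_ge1_all cont_f[unfolded f_def]
    by (intro diff_increment_le_of_slope_bounds[where a = 0 and g' = \<mu>' and U' = U']) auto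
  obtain xb where "xb > 0" and f_pos: "\<forall>x. 0 \<le> x \<and> x < xb \<longrightarrow> f x > 0"
    and f_neg: "\<forall>x>xb. f x < 0"
    using linearly_decreasing_sign_change[OF cont_f _ _ f_slope] \<mu>0 \<open>c < r\<close> by (auto simp: f_def)
  have LU_eq_f: "gen \<mu> \<sigma> U' U'' m - r * U m = f m" if "u\<^sub>s \<le> m" for m
    using second_derivative_zero_where_first_constant[OF u_nonneg U'_deriv U''_cont U'_eq1 that]
      U'_eq1[OF that] by (simp add: gen_def f_def)
  have "f u\<^sub>s \<ge> 0"
  proof (cases "u\<^sub>s = 0")
    case False
    have "continuous_on {0..} (\<lambda>m. gen \<mu> \<sigma> U' U'' m - r * U m)"
      unfolding gen_def by (intro continuous_intros cont_\<mu> cont_\<sigma> cont_U cont_U' U''_cont)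
    then have "continuous_on {0..u\<^sub>s} (\<lambda>m. gen \<mu> \<sigma> U' U'' m - r * U m)"
      by (rule continuous_on_subset) auto
    then have "gen \<mu> \<sigma> U' U'' u\<^sub>s - r * U u\<^sub>s \<ge> 0"
      using False u_nonneg LU_pos by (intro continuous_on_pos_imp_nonneg_at_right_endpoint) auto
    then show ?thesis using LU_eq_f by simp
  qed (use \<mu>0 in \<open>simp add: f_def\<close>)
  then have "u\<^sub>s \<le> xb" using f_neg by (meson not_le)
  then show ?thesis
    using \<open>xb > 0\<close> u_nonneg f_pos f_neg LU_eq_f unfolding f_def by (auto intro!: exI[of _ xb])
qed

end
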